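(* For $i=1,2$ let $\alpha_i\in[-1,1]$ and let $f_{\alpha_i}=h_{\alpha_i}+\overline{g_{\alpha_i}}\in S_H$ with $h_{\alpha_i}(z)+g_{\alpha_i}(z)=\dfrac{z(1-\alpha_i z)}{1-z^2}$. Suppose the dilatation of $f_{\alpha_1}$ is $\omega_1(z)=-z$ and the dilatation of $f_{\alpha_2}$ is $\omega_2(z)=z$. If $\alpha_1\ge\alpha_2$, then for every $0\le t\le1$ the map $f=tf_{\alpha_1}+(1-t)f_{\alpha_2}$ belongs to $S_H$ and maps $E$ onto a domain convex in the direction of the imaginary axis.
   Context: $E=\{z\in\mathbb{C}:|z|<1\}$. For a harmonic mapping $f=h+\overline{g}$ on $E$ with $h,g$ analytic, the dilatation is $\omega=g'/h'$; $f$ is locally univalent and sense-preserving iff $h'\ne0$ and $|\omega|<1$ in $E$. $S_H$ denotes the class of harmonic, univalent, sense-preserving mappings $f=h+\overline{g}$ of $E$ normalized by $f(0)=0$, $f_z(0)=1$. A domain $\Omega$ is convex in the direction of the imaginary axis if every line parallel to the imaginary axis has connected or empty intersection with $\Omega$. *)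

theory Defs
  imports "HOL-Analysis.Analysis"
begin

definition unit_disc :: "complex set" where
  "unit_disc = ball 0 1"

definition harmonic_decomp ::
  "(complex \<Rightarrow> complex) \<Rightarrow> (complex \<Rightarrow> complex) \<Rightarrow> (complex \<Rightarrow> complex) \<Rightarrow> bool" where
  "harmonic_decomp f h g \<longleftrightarrow>
     h holomorphic_on unit_disc \<and> g holomorphic_on unit_disc \<and>
     (\<forall>z\<in>unit_disc. f z = h z + cnj (g z))"

text \<open>Class S_H: harmonic, univalent, sense-preserving (h' /= 0 and |g'/h'| < 1),
  normalized by f(0) = 0 and f_z(0) = h'(0) = 1.\<close>
definition S_H :: "(complex \<Rightarrow> complex) set" where
  "S_H = {f. \<exists>h g. harmonic_decomp f h g \<and> inj_on f unit_disc \<and>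
              (\<forall>z\<in>unit_disc. deriv h z \<noteq> 0 \<and> norm (deriv g z / deriv h z) < 1) \<and>
              f 0 = 0 \<and> deriv h 0 = 1}"

definition convex_in_imag_direction :: "complex set \<Rightarrow> bool" where
  "convex_in_imag_direction \<Omega> \<longleftrightarrow> (\<forall>c::real. connected {w\<in>\<Omega>. Re w = c})"

end

theory Submission
  imports Defs
begin

text \<open>With \<open>h = t h1 + (1 - t) h2\<close> and \<open>g = t g1 + (1 - t) g2\<close> the combination is
  \<open>f = h + conj g\<close> with \<open>h + g = \<phi>\<^sub>\<alpha>\<close>, where \<open>\<phi>\<^sub>\<alpha>(z) = z (1 - \<alpha> z) / (1 - z\<^sup>2)\<close> and
  \<open>\<alpha> = t \<alpha>1 + (1 - t) \<alpha>2\<close>. The dilatations force \<open>h1' (1 - z) = \<phi>\<^sub>\<alpha>\<^sub>1'\<close> and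
  \<open>h2' (1 + z) = \<phi>\<^sub>\<alpha>\<^sub>2'\<close>; after the substitution \<open>w = (1 + z) / (1 - z)\<close> the inequality
  \<open>|g'| < |h'|\<close> reduces to \<open>Re (h1' conj h2') \<ge> 0\<close>, which is where \<open>\<alpha>1 \<ge> \<alpha>2\<close> enters.

  Univalence and convexity in the imaginary direction come from the shear construction of Clunie and
  Sheil-Small, carried out explicitly: \<open>Re f = Re \<phi>\<^sub>\<alpha>\<close>, and with \<open>z = tanh (s / 2)\<close> every level
  set \<open>Re \<phi>\<^sub>\<alpha> = c\<close> in the disc is a single arc parametrised by \<open>Im s \<in> (-\<pi>/2, \<pi>/2)\<close>.
  Along this arc \<open>(h' + g') \<gamma>'\<close> points up the imaginary axis, so \<open>|g'| < |h'|\<close> makes \<open>Im f\<close>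
  strictly increasing. Thus \<open>f\<close> is injective and maps each level arc onto a connected vertical slice.\<close>

section \<open>Harmonic maps of the unit disc\<close>

lemma mem_unit_disc: "z \<in> unit_disc \<longleftrightarrow> norm z < 1"
  unfolding unit_disc_def by (simp add: dist_norm)

lemma open_unit_disc: "open unit_disc"
  unfolding unit_disc_def by simp

lemma connected_unit_disc: "connected unit_disc"
  unfolding unit_disc_def by simp

lemma deriv_eq_0_if_holomorphic_eq_cnj:
  assumes "u holomorphic_on S" "v holomorphic_on S" "open S" "z \<in> S"
    and "\<And>x. x \<in> S \<Longrightarrow> u x = cnj (v x)"
  shows "deriv u z = 0"
proof -
  have du: "(u has_derivative (\<lambda>k. deriv u z * k)) (at z)"
    using holomorphic_derivI[OF assms(1,3,4)] unfolding has_field_derivative_def by blast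
  have dv: "(v has_derivative (\<lambda>k. deriv v z * k)) (at z)"
    using holomorphic_derivI[OF assms(2,3,4)] unfolding has_field_derivative_def by blast
  have "(u has_derivative (\<lambda>k. cnj (deriv v z * k))) (at z)"
    by (rule has_derivative_transform_within_open[OF has_derivative_cnj[OF dv] assms(3,4)])
       (use assms(5) in auto)
  then have eq: "(\<lambda>k. deriv u z * k) = (\<lambda>k. cnj (deriv v z * k))"
    using has_derivative_unique[OF du] by blast
  have "deriv u z = cnj (deriv v z)" using fun_cong[OF eq, of 1] by simp
  moreover have "deriv u z * \<i> = cnj (deriv v z * \<i>)" using fun_cong[OF eq, of \<i>] by simp
  ultimately have "\<i> * deriv u z = - \<i> * deriv u z" by simp
  then show ?thesis by simp
qed

lemma harmonic_decomp_deriv_unique: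
  assumes "harmonic_decomp f h g" "harmonic_decomp f H G" "z \<in> unit_disc"
  shows "deriv h z = deriv H z"
proof -
  have h: "h holomorphic_on unit_disc" "g holomorphic_on unit_disc"
    and H: "H holomorphic_on unit_disc" "G holomorphic_on unit_disc"
    and eq: "\<And>x. x \<in> unit_disc \<Longrightarrow> h x + cnj (g x) = H x + cnj (G x)"
    using assms(1,2) unfolding harmonic_decomp_def by metis+
  have "deriv (\<lambda>x. h x - H x) z = 0"
  proof (rule deriv_eq_0_if_holomorphic_eq_cnj[OF _ _ open_unit_disc assms(3)])
    show "(\<lambda>x. h x - H x) holomorphic_on unit_disc" "(\<lambda>x. G x - g x) holomorphic_on unit_disc"
      using h H by (auto intro!: holomorphic_intros)
    show "h x - H x = cnj (G x - g x)" if "x \<in> unit_disc" for x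
      using eq[OF that] by (simp add: algebra_simps)
  qed
  moreover have "deriv (\<lambda>x. h x - H x) z = deriv h z - deriv H z"
    using holomorphic_derivI[OF h(1) open_unit_disc assms(3)]
      holomorphic_derivI[OF H(1) open_unit_disc assms(3)]
    by (intro DERIV_imp_deriv DERIV_diff)
  ultimately show ?thesis by simp
qed

lemma S_H_deriv_nonzero:
  assumes "f \<in> S_H" "harmonic_decomp f h g" "z \<in> unit_disc"
  shows "deriv h z \<noteq> 0"
proof -
  obtain H G where "harmonic_decomp f H G" "deriv H z \<noteq> 0"
    using assms(1,3) unfolding S_H_def by blast
  then show ?thesis using harmonic_decomp_deriv_unique[OF assms(2) _ assms(3)] by simp
qed

lemma S_H_normalization:
  assumes "f \<in> S_H" "harmonic_decomp f h g"
  shows "f 0 = 0" and "deriv h 0 = 1"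
proof -
  obtain H G where "harmonic_decomp f H G" "f 0 = 0" "deriv H 0 = 1"
    using assms(1) unfolding S_H_def by blast
  moreover have "0 \<in> unit_disc" by (simp add: mem_unit_disc)
  ultimately show "f 0 = 0" "deriv h 0 = 1"
    using harmonic_decomp_deriv_unique[OF assms(2)] by auto
qed

lemma harmonic_decomp_convex_comb:
  assumes "harmonic_decomp f1 h1 g1" "harmonic_decomp f2 h2 g2"
  shows "harmonic_decomp (\<lambda>z. complex_of_real t * f1 z + complex_of_real (1 - t) * f2 z)
           (\<lambda>z. complex_of_real t * h1 z + complex_of_real (1 - t) * h2 z)
           (\<lambda>z. complex_of_real t * g1 z + complex_of_real (1 - t) * g2 z)"
  using assms unfolding harmonic_decomp_def by (auto intro!: holomorphic_intros simp: algebra_simps)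

lemma deriv_convex_comb:
  assumes "h1 holomorphic_on S" "h2 holomorphic_on S" "open S" "z \<in> S"
  shows "deriv (\<lambda>z. complex_of_real t * h1 z + complex_of_real (1 - t) * h2 z) z
       = complex_of_real t * deriv h1 z + complex_of_real (1 - t) * deriv h2 z"
  using holomorphic_derivI[OF assms(1,3,4)] holomorphic_derivI[OF assms(2,3,4)]
  by (intro DERIV_imp_deriv DERIV_add DERIV_cmult)

lemma continuous_on_harmonic:
  assumes "h holomorphic_on S" "g holomorphic_on S"
  shows "continuous_on S (\<lambda>z. h z + cnj (g z))"
  using holomorphic_on_imp_continuous_on[OF assms(1)] holomorphic_on_imp_continuous_on[OF assms(2)]
  by (intro continuous_intros)

lemma real_linear_inverse:
  fixes A B :: complex
  assumes "norm B < norm A"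
  defines "\<delta> \<equiv> (norm A)^2 - (norm B)^2"
  shows "(\<lambda>k. A * k + cnj (B * k)) \<circ> (\<lambda>w. (cnj A * w - cnj B * cnj w) / of_real \<delta>) = id"
proof
  fix w
  have "\<delta> > 0" unfolding \<delta>_def using assms by (simp add: power_strict_mono)
  then have nz: "complex_of_real \<delta> \<noteq> 0" by simp
  have AB: "A * cnj A - B * cnj B = of_real \<delta>"
    unfolding \<delta>_def by (simp add: complex_mult_cnj cmod_power2)
  have "A * ((cnj A * w - cnj B * cnj w) / of_real \<delta>) + cnj (B * ((cnj A * w - cnj B * cnj w) / of_real \<delta>))
      = (A * cnj A - B * cnj B) * w / of_real \<delta>"
    using nz by (simp add: field_simps)
  then show "((\<lambda>k. A * k + cnj (B * k)) \<circ> (\<lambda>w. (cnj A * w - cnj B * cnj w) / of_real \<delta>)) w = id w"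
    using nz by (simp add: AB)
qed

text \<open>The real differential \<open>k \<mapsto> h' k + conj (g' k)\<close> is invertible wherever \<open>|g'| < |h'|\<close>,
  so Sussmann's open mapping theorem applies.\<close>
lemma open_image_harmonic:
  assumes h: "h holomorphic_on S" and g: "g holomorphic_on S" and S: "open S"
    and sense: "\<forall>z\<in>S. deriv h z \<noteq> 0 \<and> norm (deriv g z / deriv h z) < 1"
  shows "open ((\<lambda>z. h z + cnj (g z)) ` S)"
proof -
  define f where "f = (\<lambda>z. h z + cnj (g z))"
  have "f x \<in> interior (f ` S)" if x: "x \<in> S" for x
  proof -
    define A where "A = deriv h x"
    define B where "B = deriv g x"
    have "(h has_derivative (*) A) (at x)" "(g has_derivative (*) B) (at x)"
      using holomorphic_derivI[OF h S x] holomorphic_derivI[OF g S x]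
      unfolding has_field_derivative_def A_def B_def by auto
    then have df: "(f has_derivative (\<lambda>k. A * k + cnj (B * k))) (at x)"
      unfolding f_def by (intro has_derivative_add has_derivative_cnj)
    have "norm B < norm A"
      using sense x unfolding A_def B_def by (auto simp: norm_divide divide_less_eq)
    note inv = real_linear_inverse[OF this]
    have "bounded_linear (\<lambda>w. (cnj A * w - cnj B * cnj w) / of_real ((norm A)^2 - (norm B)^2))"
      by (intro bounded_linear_compose[OF bounded_linear_divide] bounded_linear_sub
          bounded_linear_mult_right bounded_linear_compose[OF bounded_linear_mult_right bounded_linear_cnj])
    from sussmann_open_mapping[OF S _ x df this inv subset_refl]
    show ?thesis
      using continuous_on_harmonic[OF h g] interior_open[OF S] x unfolding f_def by auto
  qed
  then have "f ` S \<subseteq> interior (f ` S)" by blast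
  then show ?thesis unfolding f_def[symmetric] by (metis interior_subset open_interior subset_antisym)
qed

section \<open>The functions \<open>\<phi>\<^sub>\<alpha>\<close>\<close>

definition shear_phi :: "real \<Rightarrow> complex \<Rightarrow> complex" where
  "shear_phi \<alpha> z = z * (1 - complex_of_real \<alpha> * z) / (1 - z^2)"

lemma one_minus_square_nonzero:
  fixes z :: complex
  assumes "norm z < 1"
  shows "1 - z^2 \<noteq> 0"
proof
  assume "1 - z^2 = 0"
  then have "norm (z^2) = 1" by (metis norm_one right_minus_eq)
  moreover have "(norm z)^2 < 1" using assms by (simp add: abs_square_less_1)
  ultimately show False by (simp add: norm_power)
qed

lemma shear_phi_has_field_derivative:
  assumes "norm z < 1"
  shows "(shear_phi \<alpha> has_field_derivative
          (1 - 2 * complex_of_real \<alpha> * z + z^2) / (1 - z^2)^2) (at z)"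
proof -
  have "(shear_phi \<alpha> has_field_derivative
      ((1 - complex_of_real \<alpha> * z - z * complex_of_real \<alpha>) * (1 - z^2)
        - z * (1 - complex_of_real \<alpha> * z) * (- 2 * z)) / ((1 - z^2) * (1 - z^2))) (at z)"
    unfolding shear_phi_def[abs_def] using one_minus_square_nonzero[OF assms]
    by (auto intro!: derivative_eq_intros)
  moreover have "((1 - complex_of_real \<alpha> * z - z * complex_of_real \<alpha>) * (1 - z^2)
        - z * (1 - complex_of_real \<alpha> * z) * (- 2 * z)) / ((1 - z^2) * (1 - z^2))
      = (1 - 2 * complex_of_real \<alpha> * z + z^2) / (1 - z^2)^2"
    by (simp add: power2_eq_square algebra_simps)
  ultimately show ?thesis by simp
qed

lemma deriv_shear_phi:
  assumes "norm z < 1"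
  shows "deriv (shear_phi \<alpha>) z = (1 - 2 * complex_of_real \<alpha> * z + z^2) / (1 - z^2)^2"
  by (rule DERIV_imp_deriv[OF shear_phi_has_field_derivative[OF assms]])

lemma shear_phi_convex_comb:
  "complex_of_real t * shear_phi \<alpha>1 z + complex_of_real (1 - t) * shear_phi \<alpha>2 z
    = shear_phi (t * \<alpha>1 + (1 - t) * \<alpha>2) z"
proof -
  have "complex_of_real t * (z * (1 - complex_of_real \<alpha>1 * z))
        + complex_of_real (1 - t) * (z * (1 - complex_of_real \<alpha>2 * z))
      = z * (1 - complex_of_real (t * \<alpha>1 + (1 - t) * \<alpha>2) * z)"
    by (simp add: algebra_simps)
  then show ?thesis unfolding shear_phi_def by (metis add_divide_distrib times_divide_eq_right)
qed

lemma deriv_add_eq_shear_phi_deriv: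
  assumes "h holomorphic_on unit_disc" "g holomorphic_on unit_disc"
    and "\<forall>z\<in>unit_disc. h z + g z = shear_phi \<alpha> z" and "z \<in> unit_disc"
  shows "deriv h z + deriv g z = (1 - 2 * complex_of_real \<alpha> * z + z^2) / (1 - z^2)^2"
proof -
  have "((\<lambda>x. h x + g x) has_field_derivative deriv h z + deriv g z) (at z)"
    using holomorphic_derivI[OF assms(1) open_unit_disc assms(4)]
      holomorphic_derivI[OF assms(2) open_unit_disc assms(4)] by (rule DERIV_add)
  then have "(shear_phi \<alpha> has_field_derivative deriv h z + deriv g z) (at z)"
    by (rule has_field_derivative_transform_within_open[OF _ open_unit_disc assms(4)])
       (use assms(3) in auto)
  then show ?thesis
    using shear_phi_has_field_derivative assms(4) mem_unit_disc DERIV_unique by blast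
qed

lemma deriv_h_of_dilatation:
  assumes "h holomorphic_on unit_disc" "g holomorphic_on unit_disc"
    and "\<forall>z\<in>unit_disc. h z + g z = shear_phi \<alpha> z" and "z \<in> unit_disc"
    and "deriv h z \<noteq> 0" and "deriv g z / deriv h z = \<omega>"
  shows "deriv h z * (1 + \<omega>) = (1 - 2 * complex_of_real \<alpha> * z + z^2) / (1 - z^2)^2"
  using deriv_add_eq_shear_phi_deriv[OF assms(1-4)] assms(5,6)
  by (simp add: field_simps)

section \<open>Sense preservation of the convex combination\<close>

lemma cayley_transform_disc:
  fixes z :: complex
  assumes "norm z < 1"
  defines "w \<equiv> (1 + z) / (1 - z)"
  shows "Re w > 0" and "z = (w - 1) / (w + 1)"
proof -
  have z1: "1 - z \<noteq> 0" using assms(1) by auto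
  have "(Re z)^2 + (Im z)^2 < 1"
    using assms(1) by (simp add: cmod_power2 abs_square_less_1 flip: cmod_power2)
  moreover have "Re w = (1 - (Re z)^2 - (Im z)^2) / (cmod (1 - z))^2"
    unfolding w_def Re_divide' by (simp add: power2_eq_square algebra_simps)
  moreover have "(cmod (1 - z))^2 > 0" using z1 by simp
  ultimately show "Re w > 0" by simp
  have "w + 1 = 2 / (1 - z)" "w - 1 = 2 * z / (1 - z)"
    unfolding w_def using z1 by (simp_all add: field_simps)
  then show "z = (w - 1) / (w + 1)" using z1 by simp
qed

lemma shear_phi_deriv_cayley:
  fixes w :: complex and \<alpha> :: real
  assumes "w \<noteq> 0" "w + 1 \<noteq> 0"
  defines "z \<equiv> (w - 1) / (w + 1)"
  shows "(1 - 2 * complex_of_real \<alpha> * z + z^2) / (1 - z^2)^2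
       = (w + 1)^2 / (8 * w^2) * (complex_of_real (1 - \<alpha>) * w^2 + complex_of_real (1 + \<alpha>))"
proof -
  have zw: "z * (w + 1) = w - 1" unfolding z_def using assms by simp
  have "(1 - 2 * complex_of_real \<alpha> * z + z^2) * (w + 1)^2
      = (w + 1)^2 - 2 * complex_of_real \<alpha> * (z * (w + 1)) * (w + 1) + (z * (w + 1))^2"
    by (simp add: algebra_simps power2_eq_square)
  also have "\<dots> = 2 * (complex_of_real (1 - \<alpha>) * w^2 + complex_of_real (1 + \<alpha>))"
    unfolding zw by (simp add: algebra_simps power2_eq_square)
  finally have num: "1 - 2 * complex_of_real \<alpha> * z + z^2
      = 2 * (complex_of_real (1 - \<alpha>) * w^2 + complex_of_real (1 + \<alpha>)) / (w + 1)^2"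
    using assms by (simp add: eq_divide_eq)
  have "(1 - z^2) * (w + 1)^2 = (w + 1)^2 - (z * (w + 1))^2"
    by (simp add: algebra_simps power2_eq_square)
  also have "\<dots> = 4 * w" unfolding zw by (simp add: algebra_simps power2_eq_square)
  finally have den: "1 - z^2 = 4 * w / (w + 1)^2" using assms by (simp add: eq_divide_eq)
  have key: "2 * Y / d^2 / (4 * w / d^2)^2 = d^2 / (8 * w^2) * Y" if "d \<noteq> 0" for Y d :: complex
    using that assms(1) by (simp add: field_simps power2_eq_square)
  show ?thesis unfolding num den by (rule key) (use assms(2) in simp)
qed

lemma shear_phi_deriv_factor_cayley:
  fixes w d :: complex and \<alpha> :: real
  assumes "w \<noteq> 0" "w + 1 \<noteq> 0"
  defines "z \<equiv> (w - 1) / (w + 1)"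
    and "Y \<equiv> complex_of_real (1 - \<alpha>) * w^2 + complex_of_real (1 + \<alpha>)"
  shows "d * (1 - z) = (1 - 2 * complex_of_real \<alpha> * z + z^2) / (1 - z^2)^2
      \<Longrightarrow> d = (w + 1)^3 / (16 * w^2) * Y"
    and "d * (1 + z) = (1 - 2 * complex_of_real \<alpha> * z + z^2) / (1 - z^2)^2
      \<Longrightarrow> d = (w + 1)^3 / (16 * w^2) * (Y / w)"
proof -
  have "1 - z = 2 / (w + 1)" "1 + z = 2 * w / (w + 1)"
    unfolding z_def using assms(2) by (simp_all add: field_simps)
  note eqs = this shear_phi_deriv_cayley[OF assms(1,2), of \<alpha>, folded z_def Y_def]
  show "d * (1 - z) = (1 - 2 * complex_of_real \<alpha> * z + z^2) / (1 - z^2)^2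
      \<Longrightarrow> d = (w + 1)^3 / (16 * w^2) * Y"
    "d * (1 + z) = (1 - 2 * complex_of_real \<alpha> * z + z^2) / (1 - z^2)^2
      \<Longrightarrow> d = (w + 1)^3 / (16 * w^2) * (Y / w)"
    unfolding eqs using assms(1,2) by (simp_all add: field_simps power2_eq_square power3_eq_cube)
qed

lemma quadratic_nonzero_right_half_plane:
  fixes w :: complex and \<alpha> :: real
  assumes "Re w > 0" "-1 \<le> \<alpha>" "\<alpha> \<le> 1"
  shows "complex_of_real (1 - \<alpha>) * w^2 + complex_of_real (1 + \<alpha>) \<noteq> 0"
proof
  assume h: "complex_of_real (1 - \<alpha>) * w^2 + complex_of_real (1 + \<alpha>) = 0"
  obtain u y where w: "w = Complex u y" by (cases w)
  have re: "(1 - \<alpha>) * (u^2 - y^2) + (1 + \<alpha>) = 0" and im: "(1 - \<alpha>) * (2 * u * y) = 0"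
    using arg_cong[OF h, of Re] arg_cong[OF h, of Im] unfolding w
    by (simp_all add: power2_eq_square algebra_simps)
  have u: "u > 0" using assms(1) w by simp
  show False
  proof (cases "\<alpha> = 1")
    case False
    then have "y = 0" using im u assms by simp
    then have "(1 - \<alpha>) * u^2 + (1 + \<alpha>) = 0" using re by simp
    moreover have "(1 - \<alpha>) * u^2 > 0" using False assms u by simp
    ultimately show False using assms by linarith
  qed (use re in simp)
qed

lemma quartic_form_nonneg:
  fixes u y a1 a2 b1 b2 :: real
  assumes "u > 0" "a1 \<ge> 0" "a2 \<ge> 0" "b1 \<ge> 0" "b2 \<ge> 0" "a1 * b2 \<le> a2 * b1"
  shows "u * (a1 * a2 * (u^2 + y^2)^2 + a1 * b2 * (u^2 - 3 * y^2) + a2 * b1 * (u^2 + y^2) + b1 * b2) \<ge> 0"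
proof -
  define R where "R = u^2 + y^2"
  define m where "m = a1 * b2"
  have R0: "R \<ge> 0" unfolding R_def by simp
  have m0: "m \<ge> 0" unfolding m_def using assms by simp
  have mm: "m * m \<le> (a1 * a2) * (b1 * b2)"
  proof -
    have "m * m \<le> m * (a2 * b1)" using m0 assms(6) m_def mult_left_mono by blast
    also have "\<dots> = (a1 * a2) * (b1 * b2)" unfolding m_def by (simp add: algebra_simps)
    finally show ?thesis .
  qed
  \<comment> \<open>AM-GM, using \<open>m\<^sup>2 \<le> a1 a2 b1 b2\<close>\<close>
  have amgm: "a1 * a2 * R^2 + b1 * b2 \<ge> 2 * m * R"
  proof (cases "a1 * a2 = 0")
    case True
    then have "m * m \<le> 0" using mm by (metis mult_zero_left)
    then have "m = 0" using m0 by (simp add: mult_le_0_iff)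
    then show ?thesis using True assms by simp
  next
    case False
    then have p: "a1 * a2 > 0" using assms by (simp add: less_le)
    have "(a1 * a2) * (a1 * a2 * R^2 + b1 * b2 - 2 * m * R) = (a1 * a2 * R - m)^2 + ((a1 * a2) * (b1 * b2) - m * m)"
      by (simp add: algebra_simps power2_eq_square)
    also have "\<dots> \<ge> 0" using mm by simp
    finally show ?thesis using p by (simp add: zero_le_mult_iff)
  qed
  have "a1 * b2 * (u^2 - 3 * y^2) \<ge> m * (-3 * R)"
    unfolding m_def R_def using assms(2,5) by (intro mult_left_mono) simp_all
  moreover have "a2 * b1 * R \<ge> m * R" using assms(6) R0 unfolding m_def by (simp add: mult_right_mono)
  ultimately have "a1 * a2 * R^2 + a1 * b2 * (u^2 - 3 * y^2) + a2 * b1 * R + b1 * b2 \<ge> 0"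
    using amgm by linarith
  then show ?thesis unfolding R_def using assms(1) by simp
qed

lemma Re_quadratic_mult_cnj_nonneg:
  fixes w :: complex and a1 a2 b1 b2 :: real
  assumes "Re w > 0" "a1 \<ge> 0" "a2 \<ge> 0" "b1 \<ge> 0" "b2 \<ge> 0" "a1 * b2 \<le> a2 * b1"
  shows "Re ((of_real a1 * w^2 + of_real b1) * cnj ((of_real a2 * w^2 + of_real b2) / w)) \<ge> 0"
proof -
  obtain u y where w: "w = Complex u y" by (cases w)
  have u: "u > 0" using assms(1) w by simp
  then have R: "u^2 + y^2 > 0" by (simp add: add_pos_nonneg)
  have "Re ((of_real a1 * w^2 + of_real b1) * cnj ((of_real a2 * w^2 + of_real b2) / w))
      = u * (a1 * a2 * (u^2 + y^2)^2 + a1 * b2 * (u^2 - 3 * y^2) + a2 * b1 * (u^2 + y^2) + b1 * b2)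
          / (u^2 + y^2)"
    unfolding w using R by (simp add: Re_divide Im_divide power2_eq_square field_simps)
  also have "\<dots> \<ge> 0" using quartic_form_nonneg[OF u assms(2-6), of y] R by simp
  finally show ?thesis .
qed

lemma add_nonzero_if_Re_mult_cnj_nonneg:
  fixes A B :: complex
  assumes "Re (A * cnj B) \<ge> 0" "A \<noteq> 0 \<or> B \<noteq> 0"
  shows "A + B \<noteq> 0"
proof
  assume "A + B = 0"
  then have "B = - A" by (simp add: add_eq_0_iff2)
  then have "Re (A * cnj B) = - ((cmod A)^2)" by (simp only: cmod_power2) (simp add: power2_eq_square)
  then have "A = 0" using assms(1) by simp
  then show False using assms(2) \<open>B = - A\<close> by simp
qed

lemma norm_mult_diff_lt_norm_add:
  fixes z A B :: complex
  assumes "norm z < 1" "Re (A * cnj B) \<ge> 0" "A + B \<noteq> 0"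
  shows "norm (z * (B - A)) < norm (A + B)"
proof -
  have "(norm (B - A))^2 = (norm (A + B))^2 - 4 * Re (A * cnj B)"
    by (simp only: cmod_power2) (simp add: power2_eq_square algebra_simps)
  then have "(norm (B - A))^2 \<le> (norm (A + B))^2" using assms(2) by linarith
  then have "norm (B - A) \<le> norm (A + B)" by (rule power2_le_imp_le) simp
  then have "norm z * norm (B - A) \<le> norm z * norm (A + B)" by (simp add: mult_left_mono)
  also have "\<dots> < norm (A + B)" using assms(1,3) by simp
  finally show ?thesis by (simp add: norm_mult)
qed

text \<open>After the Cayley substitution \<open>w = (1 + z) / (1 - z)\<close> one has \<open>d1 = K Y1\<close> and
  \<open>d2 = K Y2 / w\<close> with a common factor \<open>K\<close>, and \<open>\<alpha>2 \<le> \<alpha>1\<close> is what makes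
  \<open>Re (Y1 conj (Y2 / w)) \<ge> 0\<close>.\<close>
lemma convex_comb_dilatation_lt_1:
  fixes z d1 d2 :: complex and \<alpha>1 \<alpha>2 t :: real
  assumes "norm z < 1" "-1 \<le> \<alpha>2" "\<alpha>2 \<le> \<alpha>1" "\<alpha>1 \<le> 1" "0 \<le> t" "t \<le> 1"
    and d1: "d1 * (1 - z) = (1 - 2 * complex_of_real \<alpha>1 * z + z^2) / (1 - z^2)^2"
    and d2: "d2 * (1 + z) = (1 - 2 * complex_of_real \<alpha>2 * z + z^2) / (1 - z^2)^2"
  shows "complex_of_real t * d1 + complex_of_real (1 - t) * d2 \<noteq> 0"
    and "norm (z * (complex_of_real (1 - t) * d2 - complex_of_real t * d1)
               / (complex_of_real t * d1 + complex_of_real (1 - t) * d2)) < 1"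
proof -
  define w where "w = (1 + z) / (1 - z)"
  have wre: "Re w > 0" and zw: "z = (w - 1) / (w + 1)"
    using cayley_transform_disc[OF assms(1)] unfolding w_def by auto
  have w0: "w \<noteq> 0" and w1: "w + 1 \<noteq> 0" using wre by (auto simp: complex_eq_iff)
  define K where "K = (w + 1)^3 / (16 * w^2)"
  define Y1 where "Y1 = complex_of_real (1 - \<alpha>1) * w^2 + complex_of_real (1 + \<alpha>1)"
  define Y2 where "Y2 = complex_of_real (1 - \<alpha>2) * w^2 + complex_of_real (1 + \<alpha>2)"
  have h1: "d1 = K * Y1" and h2: "d2 = K * (Y2 / w)"
    using shear_phi_deriv_factor_cayley[OF w0 w1] d1 d2 unfolding K_def Y1_def Y2_def zw[symmetric] by auto
  define A where "A = complex_of_real t * Y1"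
  define B where "B = complex_of_real (1 - t) * (Y2 / w)"
  have Y1: "Y1 \<noteq> 0" and Y2: "Y2 \<noteq> 0"
    unfolding Y1_def Y2_def using quadratic_nonzero_right_half_plane[OF wre] assms(2-4) by auto
  define X where "X = Y1 * cnj (Y2 / w)"
  have "Re X \<ge> 0"
    unfolding X_def Y1_def Y2_def using assms(2-4)
    by (intro Re_quadratic_mult_cnj_nonneg[OF wre]) (auto simp: algebra_simps)
  moreover have "A * cnj B = complex_of_real (t * (1 - t)) * X"
    unfolding A_def B_def X_def by simp
  ultimately have reAB: "Re (A * cnj B) \<ge> 0" using assms(5,6) by simp
  have "A \<noteq> 0 \<or> B \<noteq> 0" unfolding A_def B_def using Y1 Y2 w0 by auto
  then have AB: "A + B \<noteq> 0" by (rule add_nonzero_if_Re_mult_cnj_nonneg[OF reAB])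
  have K0: "K \<noteq> 0" unfolding K_def using w0 w1 by simp
  have sum: "complex_of_real t * d1 + complex_of_real (1 - t) * d2 = K * (A + B)"
    and diff: "complex_of_real (1 - t) * d2 - complex_of_real t * d1 = K * (B - A)"
    unfolding h1 h2 A_def B_def using w0 by (simp_all add: field_simps)
  show "complex_of_real t * d1 + complex_of_real (1 - t) * d2 \<noteq> 0"
    unfolding sum using K0 AB by simp
  have "norm (z * (B - A)) < norm (A + B)" by (rule norm_mult_diff_lt_norm_add[OF assms(1) reAB AB])
  then show "norm (z * (complex_of_real (1 - t) * d2 - complex_of_real t * d1)
               / (complex_of_real t * d1 + complex_of_real (1 - t) * d2)) < 1"
    unfolding sum diff using K0 AB by (simp add: norm_mult norm_divide)
qed

section \<open>Level sets of \<open>Re \<phi>\<^sub>\<alpha>\<close>\<close>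

text \<open>\<open>tanh (s / 2)\<close>, mapping the strip \<open>|Im s| < \<pi> / 2\<close> onto the unit disc; in this variable
  \<open>\<phi>\<^sub>\<alpha>\<close> becomes a combination of \<open>e\<^sup>s\<close> and \<open>e\<^sup>-\<^sup>s\<close>.\<close>
definition strip_to_disc :: "complex \<Rightarrow> complex" where
  "strip_to_disc s = (exp s - 1) / (exp s + 1)"

lemma Re_exp_pos_strip:
  assumes "\<bar>Im s\<bar> < pi / 2"
  shows "Re (exp s) > 0"
proof -
  have "cos (Im s) > 0" using assms by (intro cos_gt_zero_pi) auto
  then show ?thesis by (simp add: Re_exp)
qed

lemma exp_add_one_nonzero_strip:
  assumes "\<bar>Im s\<bar> < pi / 2"
  shows "exp s + 1 \<noteq> 0"
  using Re_exp_pos_strip[OF assms] by (auto simp: complex_eq_iff)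

lemma strip_to_disc_in_unit_disc:
  assumes "\<bar>Im s\<bar> < pi / 2"
  shows "strip_to_disc s \<in> unit_disc"
proof -
  have re: "Re (exp s) > 0" by (rule Re_exp_pos_strip[OF assms])
  have "(cmod (exp s - 1))^2 = (cmod (exp s + 1))^2 - 4 * Re (exp s)"
    by (simp only: cmod_power2) (simp add: power2_eq_square algebra_simps)
  then have "(cmod (exp s - 1))^2 < (cmod (exp s + 1))^2" using re by linarith
  then have "cmod (exp s - 1) < cmod (exp s + 1)"
    by (rule power_less_imp_less_base) simp
  then show ?thesis
    unfolding strip_to_disc_def mem_unit_disc using exp_add_one_nonzero_strip[OF assms]
    by (simp add: norm_divide divide_less_eq)
qed

lemma strip_to_disc_surj:
  assumes "z \<in> unit_disc"
  obtains s where "\<bar>Im s\<bar> < pi / 2" "strip_to_disc s = z"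
proof -
  define w where "w = (1 + z) / (1 - z)"
  have wre: "Re w > 0" and zw: "z = (w - 1) / (w + 1)"
    using cayley_transform_disc assms unfolding w_def mem_unit_disc by auto
  then have "exp (Ln w) = w" by (auto simp: complex_eq_iff)
  then have "strip_to_disc (Ln w) = z" unfolding strip_to_disc_def zw by simp
  moreover have "\<bar>Im (Ln w)\<bar> < pi / 2" by (rule Re_Ln_pos_lt_imp[OF wre])
  ultimately show ?thesis using that by blast
qed

lemma strip_to_disc_has_field_derivative:
  assumes "\<bar>Im s\<bar> < pi / 2"
  shows "(strip_to_disc has_field_derivative deriv strip_to_disc s) (at s)"
proof -
  have "(strip_to_disc has_field_derivative
      (exp s * (exp s + 1) - (exp s - 1) * exp s) / ((exp s + 1) * (exp s + 1))) (at s)"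
    unfolding strip_to_disc_def[abs_def] using exp_add_one_nonzero_strip[OF assms]
    by (auto intro!: derivative_eq_intros)
  then show ?thesis using DERIV_imp_deriv by (metis (no_types))
qed

lemma shear_phi_cayley_inverse:
  fixes x :: complex and \<alpha> :: real
  assumes "x \<noteq> 0" "x + 1 \<noteq> 0"
  shows "shear_phi \<alpha> ((x - 1) / (x + 1))
       = (complex_of_real (1 - \<alpha>) * x - complex_of_real (1 + \<alpha>) / x) / 4 + complex_of_real \<alpha> / 2"
proof -
  define z where "z = (x - 1) / (x + 1)"
  have zx: "z * (x + 1) = x - 1" unfolding z_def using assms by simp
  have "(1 - z^2) * (x + 1)^2 = (x + 1)^2 - (z * (x + 1))^2" by (simp add: algebra_simps power2_eq_square)
  also have "\<dots> = 4 * x" unfolding zx by (simp add: algebra_simps power2_eq_square)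
  finally have den: "1 - z^2 = 4 * x / (x + 1)^2" using assms by (simp add: eq_divide_eq)
  have "(z * (1 - of_real \<alpha> * z)) * (x + 1)^2 = (z * (x + 1)) * ((x + 1) - of_real \<alpha> * (z * (x + 1)))"
    by (simp add: algebra_simps power2_eq_square)
  then have num: "z * (1 - of_real \<alpha> * z) = (x - 1) * ((x + 1) - of_real \<alpha> * (x - 1)) / (x + 1)^2"
    unfolding zx using assms by (simp add: eq_divide_eq)
  have key: "(A / d^2) / (4 * x / d^2) = A / (4 * x)" if "d \<noteq> 0" for A d :: complex
    using that assms by simp
  have "shear_phi \<alpha> z = (x - 1) * ((x + 1) - of_real \<alpha> * (x - 1)) / (4 * x)"
    unfolding shear_phi_def num den by (rule key) (use assms in simp)
  also have "\<dots> = (of_real (1 - \<alpha>) * x - of_real (1 + \<alpha>) / x) / 4 + of_real \<alpha> / 2"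
    using assms(1) by (simp add: field_simps)
  finally show ?thesis unfolding z_def .
qed

lemma shear_phi_strip_to_disc:
  assumes "\<bar>Im s\<bar> < pi / 2"
  shows "shear_phi \<alpha> (strip_to_disc s)
       = (complex_of_real (1 - \<alpha>) * exp s - complex_of_real (1 + \<alpha>) * exp (- s)) / 4
         + complex_of_real \<alpha> / 2"
  using shear_phi_cayley_inverse[OF exp_not_eq_zero exp_add_one_nonzero_strip[OF assms], of \<alpha>]
  unfolding strip_to_disc_def by (simp add: exp_minus inverse_eq_divide)

lemma Re_shear_phi_strip_to_disc:
  assumes "\<bar>Im s\<bar> < pi / 2"
  shows "Re (shear_phi \<alpha> (strip_to_disc s))
       = cos (Im s) * ((1 - \<alpha>) * exp (Re s) - (1 + \<alpha>) * exp (- Re s)) / 4 + \<alpha> / 2"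
  unfolding shear_phi_strip_to_disc[OF assms] by (simp add: Re_exp algebra_simps)

lemma shear_phi_strip_to_disc_deriv:
  assumes "\<bar>Im s\<bar> < pi / 2"
  shows "deriv (shear_phi \<alpha>) (strip_to_disc s) * deriv strip_to_disc s
       = (complex_of_real (1 - \<alpha>) * exp s + complex_of_real (1 + \<alpha>) * exp (- s)) / 4"
proof -
  have strip: "open {s. \<bar>Im s\<bar> < pi / 2}"
    by (intro open_Collect_less continuous_intros)
  have disc: "norm (strip_to_disc s) < 1"
    using strip_to_disc_in_unit_disc[OF assms] unfolding mem_unit_disc .
  have "(shear_phi \<alpha> has_field_derivative deriv (shear_phi \<alpha>) (strip_to_disc s)) (at (strip_to_disc s))"
    unfolding deriv_shear_phi[OF disc] by (rule shear_phi_has_field_derivative[OF disc])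
  from DERIV_chain[OF this strip_to_disc_has_field_derivative[OF assms]]
  have "((\<lambda>s. (complex_of_real (1 - \<alpha>) * exp s - complex_of_real (1 + \<alpha>) * exp (- s)) / 4
        + complex_of_real \<alpha> / 2) has_field_derivative
      deriv (shear_phi \<alpha>) (strip_to_disc s) * deriv strip_to_disc s) (at s)"
    by (rule has_field_derivative_transform_within_open[OF _ strip])
       (use assms in \<open>simp_all add: shear_phi_strip_to_disc\<close>)
  moreover have "((\<lambda>s. (A * exp s - B * exp (- s)) / 4 + C) has_field_derivative
      (A * exp s + B * exp (- s)) / 4) (at s)" for A B C :: complex
    by (auto intro!: derivative_eq_intros simp: algebra_simps)
  ultimately show ?thesis by (rule DERIV_unique)
qed

lemma Re_shear_phi_strip_to_disc_deriv_pos: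
  assumes "\<bar>Im s\<bar> < pi / 2" "\<bar>\<alpha>\<bar> \<le> 1"
  shows "Re ((complex_of_real (1 - \<alpha>) * exp s + complex_of_real (1 + \<alpha>) * exp (- s)) / 4) > 0"
proof -
  have cos: "cos (Im s) > 0" using assms(1) by (intro cos_gt_zero_pi) auto
  have pos: "(1 - \<alpha>) * exp (Re s) + (1 + \<alpha>) * exp (- Re s) > 0"
  proof (cases "\<alpha> = 1")
    case False
    then have "(1 - \<alpha>) * exp (Re s) > 0" using assms(2) by simp
    then show ?thesis using assms(2) by (simp add: add_pos_nonneg)
  qed simp
  have eq: "Re ((complex_of_real (1 - \<alpha>) * exp s + complex_of_real (1 + \<alpha>) * exp (- s)) / 4)
      = cos (Im s) * ((1 - \<alpha>) * exp (Re s) + (1 + \<alpha>) * exp (- Re s)) / 4"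
    by (simp add: Re_exp algebra_simps)
  show ?thesis unfolding eq using cos pos by simp
qed

text \<open>For \<open>a, b \<ge> 0\<close> with \<open>a + b > 0\<close>, \<open>x \<mapsto> a x - b / x\<close> is strictly increasing on \<open>x > 0\<close>;
  \<open>pos_root a b y\<close> is the point where it takes the value \<open>y\<close>, which exists iff
  \<open>pos_root_exists a b y\<close>.\<close>
definition pos_root :: "real \<Rightarrow> real \<Rightarrow> real \<Rightarrow> real" where
  "pos_root a b y = (if a = 0 then - b / y else (y + sqrt (y^2 + 4 * a * b)) / (2 * a))"

definition pos_root_exists :: "real \<Rightarrow> real \<Rightarrow> real \<Rightarrow> bool" where
  "pos_root_exists a b y \<longleftrightarrow> (a > 0 \<or> y < 0) \<and> (b > 0 \<or> y > 0)"

lemma pos_root_exists_divide: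
  assumes "c > 0"
  shows "pos_root_exists a b (y / c) \<longleftrightarrow> pos_root_exists a b y"
  using assms by (auto simp: pos_root_exists_def divide_neg_pos divide_pos_pos
      zero_less_divide_iff divide_less_0_iff)

lemma pos_root_exists_value:
  assumes "a \<ge> 0" "b \<ge> 0" "a + b > 0" "x > 0"
  shows "pos_root_exists a b (a * x - b / x)"
  using assms unfolding pos_root_exists_def by (cases "a = 0"; cases "b = 0") auto

lemma pos_root_solves:
  assumes "a \<ge> 0" "b \<ge> 0" "pos_root_exists a b y"
  shows "pos_root a b y > 0" and "a * pos_root a b y - b / pos_root a b y = y"
proof -
  have "pos_root a b y > 0 \<and> a * pos_root a b y - b / pos_root a b y = y"
  proof (cases "a = 0")
    case True
    then have y: "y < 0" and b: "b > 0" using assms(3) unfolding pos_root_exists_def by auto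
    then show ?thesis using True by (simp add: pos_root_def field_simps divide_pos_neg)
  next
    case False
    then have a: "a > 0" using assms(1) by simp
    define S where "S = sqrt (y^2 + 4 * a * b)"
    have "y^2 + 4 * a * b \<ge> 0" using assms(1,2) by simp
    then have S0: "S \<ge> 0" and SS: "S^2 = y^2 + 4 * a * b" unfolding S_def by simp_all
    have yS: "y + S > 0"
    proof (cases "b > 0")
      case True
      then have "\<bar>y\<bar> < S" using SS a S0 by (simp add: abs_less_iff power2_less_imp_less)
      then show ?thesis by linarith
    next
      case False
      then show ?thesis using S0 assms(3) unfolding pos_root_exists_def by auto
    qed
    have r: "pos_root a b y = (y + S) / (2 * a)" using False by (simp add: pos_root_def S_def)
    \<comment> \<open>\<open>b / x = (S - y) / 2\<close> because \<open>(S + y)(S - y) = 4 a b\<close>\<close>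
    have e1: "b / ((y + S) / (2 * a)) = (S - y) / 2"
      using a yS SS by (simp add: field_simps power2_eq_square)
    have e2: "a * ((y + S) / (2 * a)) = (y + S) / 2" using a by simp
    show ?thesis unfolding r e1 e2 using a yS by (simp add: field_simps)
  qed
  then show "pos_root a b y > 0" "a * pos_root a b y - b / pos_root a b y = y" by auto
qed

lemma ax_minus_b_div_x_inj:
  fixes a b x x' :: real
  assumes "a \<ge> 0" "b \<ge> 0" "a + b > 0" "x > 0" "x' > 0" "a * x - b / x = a * x' - b / x'"
  shows "x = x'"
proof (rule ccontr)
  assume ne: "x \<noteq> x'"
  have "(a * x - b / x) - (a * x' - b / x') = (x - x') * (a + b / (x * x'))"
    using assms(4,5) by (simp add: field_simps)
  moreover have "a + b / (x * x') > 0"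
    using assms by (cases "a > 0") (auto intro: add_pos_nonneg add_nonneg_pos)
  ultimately show False using ne assms(6) by simp
qed

lemma pos_root_differentiable:
  assumes "a \<ge> 0" "b \<ge> 0" "pos_root_exists a b y"
  shows "\<exists>d. (pos_root a b has_real_derivative d) (at y)"
proof (cases "a = 0")
  case True
  then have "y \<noteq> 0" using assms(3) unfolding pos_root_exists_def by auto
  moreover have "pos_root a b = (\<lambda>y. - b / y)" using True by (simp add: pos_root_def fun_eq_iff)
  ultimately show ?thesis by (auto intro!: derivative_eq_intros)
next
  case False
  have pos: "y^2 + 4 * a * b > 0"
    using False assms unfolding pos_root_exists_def by (auto intro: add_nonneg_pos add_pos_nonneg)
  have "((\<lambda>y. y^2 + 4 * a * b) has_real_derivative 2 * y) (at y)"
    by (auto intro!: derivative_eq_intros)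
  from DERIV_chain2[OF DERIV_real_sqrt[OF pos] this]
  have "((\<lambda>y. sqrt (y^2 + 4 * a * b)) has_real_derivative
      inverse (sqrt (y^2 + 4 * a * b)) / 2 * (2 * y)) (at y)" .
  then have "((\<lambda>y. (y + sqrt (y^2 + 4 * a * b)) / (2 * a)) has_real_derivative
      (1 + inverse (sqrt (y^2 + 4 * a * b)) / 2 * (2 * y)) / (2 * a)) (at y)"
    by (intro DERIV_cdivide DERIV_add DERIV_ident)
  moreover have "pos_root a b = (\<lambda>y. (y + sqrt (y^2 + 4 * a * b)) / (2 * a))"
    using False by (simp add: pos_root_def fun_eq_iff)
  ultimately show ?thesis by auto
qed

text \<open>The arc \<open>Re s = \<sigma>(\<theta>)\<close>, \<open>Im s = \<theta>\<close> of the strip on which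
  \<open>Re \<phi>\<^sub>\<alpha> (strip_to_disc s) = c\<close>, solving
  \<open>cos \<theta> ((1 - \<alpha>) e\<^sup>\<sigma> - (1 + \<alpha>) e\<^sup>-\<^sup>\<sigma>) = 4 c - 2 \<alpha>\<close> for \<open>\<sigma>\<close>.\<close>
definition level_arc :: "real \<Rightarrow> real \<Rightarrow> real \<Rightarrow> complex" where
  "level_arc \<alpha> c \<theta> = Complex (ln (pos_root (1 - \<alpha>) (1 + \<alpha>) ((4 * c - 2 * \<alpha>) / cos \<theta>))) \<theta>"

lemma Re_shear_phi_level_arc:
  assumes "\<bar>\<alpha>\<bar> \<le> 1" "pos_root_exists (1 - \<alpha>) (1 + \<alpha>) (4 * c - 2 * \<alpha>)" "\<bar>\<theta>\<bar> < pi / 2"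
  shows "Re (shear_phi \<alpha> (strip_to_disc (level_arc \<alpha> c \<theta>))) = c"
proof -
  have cos: "cos \<theta> > 0" using assms(3) by (intro cos_gt_zero_pi) auto
  define x where "x = pos_root (1 - \<alpha>) (1 + \<alpha>) ((4 * c - 2 * \<alpha>) / cos \<theta>)"
  have ex: "pos_root_exists (1 - \<alpha>) (1 + \<alpha>) ((4 * c - 2 * \<alpha>) / cos \<theta>)"
    using assms(2) pos_root_exists_divide[OF cos] by simp
  have x: "x > 0" "(1 - \<alpha>) * x - (1 + \<alpha>) / x = (4 * c - 2 * \<alpha>) / cos \<theta>"
    using pos_root_solves[OF _ _ ex] assms(1) unfolding x_def by auto
  have "exp (ln x) = x" "exp (- ln x) = 1 / x" using x(1) by (auto simp: exp_minus inverse_eq_divide)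
  then have "Re (shear_phi \<alpha> (strip_to_disc (level_arc \<alpha> c \<theta>)))
      = cos \<theta> * ((1 - \<alpha>) * x - (1 + \<alpha>) / x) / 4 + \<alpha> / 2"
    unfolding level_arc_def x_def[symmetric] using assms(3)
    by (subst Re_shear_phi_strip_to_disc) simp_all
  also have "\<dots> = c" unfolding x(2) using cos by (simp add: field_simps)
  finally show ?thesis .
qed

lemma level_arc_unique:
  assumes "\<bar>\<alpha>\<bar> \<le> 1" "\<bar>Im s\<bar> < pi / 2" "Re (shear_phi \<alpha> (strip_to_disc s)) = c"
  shows "pos_root_exists (1 - \<alpha>) (1 + \<alpha>) (4 * c - 2 * \<alpha>)" and "s = level_arc \<alpha> c (Im s)"
proof -
  have cos: "cos (Im s) > 0" using assms(2) by (intro cos_gt_zero_pi) auto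
  define x where "x = exp (Re s)"
  have x: "x > 0" unfolding x_def by simp
  have "cos (Im s) * ((1 - \<alpha>) * x - (1 + \<alpha>) / x) / 4 + \<alpha> / 2 = c"
    using assms(3) Re_shear_phi_strip_to_disc[OF assms(2)]
    unfolding x_def by (simp add: exp_minus inverse_eq_divide)
  then have eq: "(1 - \<alpha>) * x - (1 + \<alpha>) / x = (4 * c - 2 * \<alpha>) / cos (Im s)"
    using cos by (simp add: field_simps)
  have ex: "pos_root_exists (1 - \<alpha>) (1 + \<alpha>) ((4 * c - 2 * \<alpha>) / cos (Im s))"
    unfolding eq[symmetric] using assms(1) x by (intro pos_root_exists_value) auto
  then show "pos_root_exists (1 - \<alpha>) (1 + \<alpha>) (4 * c - 2 * \<alpha>)"
    using pos_root_exists_divide[OF cos] by simp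
  have ab: "1 - \<alpha> \<ge> 0" "1 + \<alpha> \<ge> 0" using assms(1) by auto
  note r = pos_root_solves[OF ab ex]
  have "x = pos_root (1 - \<alpha>) (1 + \<alpha>) ((4 * c - 2 * \<alpha>) / cos (Im s))"
    by (rule ax_minus_b_div_x_inj[OF ab _ x r(1)]) (simp_all add: eq r(2))
  then have "ln (pos_root (1 - \<alpha>) (1 + \<alpha>) ((4 * c - 2 * \<alpha>) / cos (Im s))) = Re s"
    unfolding x_def by (metis ln_exp)
  then show "s = level_arc \<alpha> c (Im s)" unfolding level_arc_def by (simp add: complex_eq_iff)
qed

lemma level_arc_has_vector_derivative:
  assumes "\<bar>\<alpha>\<bar> \<le> 1" "pos_root_exists (1 - \<alpha>) (1 + \<alpha>) (4 * c - 2 * \<alpha>)" "\<bar>\<theta>\<bar> < pi / 2"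
  obtains d where "(level_arc \<alpha> c has_vector_derivative Complex d 1) (at \<theta>)"
proof -
  have cos: "cos \<theta> > 0" using assms(3) by (intro cos_gt_zero_pi) auto
  define y where "y = (4 * c - 2 * \<alpha>) / cos \<theta>"
  have ex: "pos_root_exists (1 - \<alpha>) (1 + \<alpha>) y"
    unfolding y_def using assms(2) pos_root_exists_divide[OF cos] by simp
  have ab: "1 - \<alpha> \<ge> 0" "1 + \<alpha> \<ge> 0" using assms(1) by auto
  obtain p where p: "(pos_root (1 - \<alpha>) (1 + \<alpha>) has_real_derivative p) (at y)"
    using pos_root_differentiable[OF ab ex] by blast
  have "((\<lambda>\<theta>. (4 * c - 2 * \<alpha>) / cos \<theta>) has_real_derivative
      (4 * c - 2 * \<alpha>) * sin \<theta> / (cos \<theta>)^2) (at \<theta>)"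
    using cos by (auto intro!: derivative_eq_intros simp: power2_eq_square)
  from DERIV_chain2[OF p[unfolded y_def] this]
  have "((\<lambda>\<theta>. pos_root (1 - \<alpha>) (1 + \<alpha>) ((4 * c - 2 * \<alpha>) / cos \<theta>)) has_real_derivative
      p * ((4 * c - 2 * \<alpha>) * sin \<theta> / (cos \<theta>)^2)) (at \<theta>)" .
  from DERIV_chain2[OF DERIV_ln_divide[OF pos_root_solves(1)[OF ab ex, unfolded y_def]] this]
  have "((\<lambda>\<theta>. ln (pos_root (1 - \<alpha>) (1 + \<alpha>) ((4 * c - 2 * \<alpha>) / cos \<theta>))) has_real_derivative
      1 / pos_root (1 - \<alpha>) (1 + \<alpha>) y * (p * ((4 * c - 2 * \<alpha>) * sin \<theta> / (cos \<theta>)^2))) (at \<theta>)"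
    unfolding y_def .
  then have "(level_arc \<alpha> c has_vector_derivative Complex
      (1 / pos_root (1 - \<alpha>) (1 + \<alpha>) y * (p * ((4 * c - 2 * \<alpha>) * sin \<theta> / (cos \<theta>)^2))) 1) (at \<theta>)"
    unfolding level_arc_def has_vector_derivative_complex_iff by (simp add: DERIV_ident)
  then show ?thesis by (rule that)
qed

lemma level_set_shear_phi:
  assumes "\<bar>\<alpha>\<bar> \<le> 1"
  shows "{z \<in> unit_disc. Re (shear_phi \<alpha> z) = c} =
    (if pos_root_exists (1 - \<alpha>) (1 + \<alpha>) (4 * c - 2 * \<alpha>)
     then (\<lambda>\<theta>. strip_to_disc (level_arc \<alpha> c \<theta>)) ` {\<theta>. \<bar>\<theta>\<bar> < pi / 2} else {})"
    (is "?L = ?R")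
proof
  show "?L \<subseteq> ?R"
  proof
    fix z assume "z \<in> ?L"
    then have z: "z \<in> unit_disc" "Re (shear_phi \<alpha> z) = c" by auto
    obtain s where s: "\<bar>Im s\<bar> < pi / 2" "strip_to_disc s = z" using strip_to_disc_surj[OF z(1)] .
    have "pos_root_exists (1 - \<alpha>) (1 + \<alpha>) (4 * c - 2 * \<alpha>)" "s = level_arc \<alpha> c (Im s)"
      using level_arc_unique[OF assms s(1)] z(2) s(2) by auto
    then show "z \<in> ?R" using s by force
  qed
  have "Im (level_arc \<alpha> c \<theta>) = \<theta>" for \<theta> unfolding level_arc_def by simp
  then show "?R \<subseteq> ?L"
    using strip_to_disc_in_unit_disc Re_shear_phi_level_arc[OF assms] by auto
qed

lemma Im_mult_pos_if_Re_mult_zero: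
  fixes x :: real and P :: complex
  assumes "Re ((complex_of_real x + \<i>) * P) = 0" "Re P > 0"
  shows "Im ((complex_of_real x + \<i>) * P) > 0"
proof -
  have "x * Re P = Im P" using assms(1) by simp
  then have "Re P * Im ((complex_of_real x + \<i>) * P) = (Im P)^2 + (Re P)^2"
    by (simp add: algebra_simps power2_eq_square)
  also have "\<dots> > 0" using assms(2) by (simp add: add_nonneg_pos)
  finally show ?thesis using assms(2) by (simp add: zero_less_mult_iff)
qed

text \<open>Since \<open>Re \<phi>\<^sub>\<alpha>\<close> is constant along the arc, \<open>\<phi>\<^sub>\<alpha>' \<gamma>'\<close> is purely imaginary; in the strip
  it equals \<open>(\<sigma>' + i) \<Phi>'(s)\<close> where \<open>\<Phi> = \<phi>\<^sub>\<alpha> \<circ> strip_to_disc\<close> has \<open>Re \<Phi>' > 0\<close>, which fixes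
  the sign of its imaginary part.\<close>
lemma shear_phi_level_arc_tangent:
  assumes "\<bar>\<alpha>\<bar> \<le> 1" "pos_root_exists (1 - \<alpha>) (1 + \<alpha>) (4 * c - 2 * \<alpha>)" "\<bar>\<theta>\<bar> < pi / 2"
  obtains \<gamma>' where "((\<lambda>\<theta>. strip_to_disc (level_arc \<alpha> c \<theta>)) has_vector_derivative \<gamma>') (at \<theta>)"
    and "Re (deriv (shear_phi \<alpha>) (strip_to_disc (level_arc \<alpha> c \<theta>)) * \<gamma>') = 0"
    and "Im (deriv (shear_phi \<alpha>) (strip_to_disc (level_arc \<alpha> c \<theta>)) * \<gamma>') > 0"
proof -
  define I where "I = {\<theta>::real. \<bar>\<theta>\<bar> < pi / 2}"
  have I: "open I" "\<theta> \<in> I" unfolding I_def using assms(3)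
    by (auto intro!: open_Collect_less continuous_intros)
  define s where "s = level_arc \<alpha> c \<theta>"
  have s: "\<bar>Im s\<bar> < pi / 2" unfolding s_def level_arc_def using assms(3) by simp
  define \<phi>' where "\<phi>' = deriv (shear_phi \<alpha>) (strip_to_disc s)"
  obtain d where d: "(level_arc \<alpha> c has_vector_derivative Complex d 1) (at \<theta>)"
    using level_arc_has_vector_derivative[OF assms] .
  define \<gamma>' where "\<gamma>' = Complex d 1 * deriv strip_to_disc s"
  have d\<gamma>: "((\<lambda>\<theta>. strip_to_disc (level_arc \<alpha> c \<theta>)) has_vector_derivative \<gamma>') (at \<theta>)"
    using field_vector_diff_chain_at[OF d strip_to_disc_has_field_derivative[OF s[unfolded s_def]]]
    unfolding \<gamma>'_def s_def o_def .
  have disc: "norm (strip_to_disc s) < 1" using strip_to_disc_in_unit_disc[OF s] mem_unit_disc by blast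
  have "(shear_phi \<alpha> has_field_derivative \<phi>') (at (strip_to_disc s))"
    unfolding \<phi>'_def deriv_shear_phi[OF disc] by (rule shear_phi_has_field_derivative[OF disc])
  from field_vector_diff_chain_at[OF d\<gamma>, unfolded s_def[symmetric], OF this]
  have "((\<lambda>\<theta>. Re (shear_phi \<alpha> (strip_to_disc (level_arc \<alpha> c \<theta>)))) has_real_derivative
      Re (\<gamma>' * \<phi>')) (at \<theta>)"
    unfolding o_def by (rule has_field_derivative_Re)
  then have "((\<lambda>_. c) has_real_derivative Re (\<gamma>' * \<phi>')) (at \<theta>)"
    by (rule has_field_derivative_transform_within_open[OF _ I])
       (use Re_shear_phi_level_arc[OF assms(1,2)] in \<open>auto simp: I_def\<close>)
  then have "Re (\<gamma>' * \<phi>') = 0" by (rule DERIV_unique[OF _ DERIV_const])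
  then have Re0: "Re (\<phi>' * \<gamma>') = 0" by (simp only: mult.commute)
  have "Complex d 1 = complex_of_real d + \<i>" by (simp add: complex_eq_iff)
  then have "\<phi>' * \<gamma>' = (complex_of_real d + \<i>) * (\<phi>' * deriv strip_to_disc s)"
    unfolding \<gamma>'_def by (simp add: ac_simps)
  also have "\<phi>' * deriv strip_to_disc s
      = (complex_of_real (1 - \<alpha>) * exp s + complex_of_real (1 + \<alpha>) * exp (- s)) / 4"
    unfolding \<phi>'_def by (rule shear_phi_strip_to_disc_deriv[OF s])
  finally have eq: "\<phi>' * \<gamma>' = (complex_of_real d + \<i>) *
      ((complex_of_real (1 - \<alpha>) * exp s + complex_of_real (1 + \<alpha>) * exp (- s)) / 4)" .
  have "Im (\<phi>' * \<gamma>') > 0"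
    unfolding eq using Re0[unfolded eq]
    by (rule Im_mult_pos_if_Re_mult_zero[OF _ Re_shear_phi_strip_to_disc_deriv_pos[OF s assms(1)]])
  then show ?thesis using that d\<gamma> Re0 unfolding \<phi>'_def s_def by blast
qed

lemma continuous_on_level_arc:
  assumes "\<bar>\<alpha>\<bar> \<le> 1" "pos_root_exists (1 - \<alpha>) (1 + \<alpha>) (4 * c - 2 * \<alpha>)"
  shows "continuous_on {\<theta>. \<bar>\<theta>\<bar> < pi / 2} (\<lambda>\<theta>. strip_to_disc (level_arc \<alpha> c \<theta>))"
proof (intro continuous_at_imp_continuous_on ballI)
  fix \<theta> :: real assume "\<theta> \<in> {\<theta>. \<bar>\<theta>\<bar> < pi / 2}"
  then obtain \<gamma>' where "((\<lambda>\<theta>. strip_to_disc (level_arc \<alpha> c \<theta>)) has_vector_derivative \<gamma>') (at \<theta>)"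
    using shear_phi_level_arc_tangent[OF assms] by auto
  then show "isCont (\<lambda>\<theta>. strip_to_disc (level_arc \<alpha> c \<theta>)) \<theta>"
    by (rule has_vector_derivative_continuous)
qed

section \<open>The shear construction\<close>

lemma Im_one_minus_mult_pos:
  fixes w u :: complex
  assumes "Re ((1 + w) * u) = 0" "Im ((1 + w) * u) > 0" "norm w < 1"
  shows "Im ((1 - w) * u) > 0"
proof -
  have "Im ((1 - w) * u) * ((1 + Re w)^2 + (Im w)^2)
     = Im ((1 + w) * u) * (1 - (Re w)^2 - (Im w)^2) - 2 * Im w * Re ((1 + w) * u)"
    by (simp add: algebra_simps power2_eq_square)
  moreover have "(Re w)^2 + (Im w)^2 < 1"
    using assms(3) by (simp add: abs_square_less_1 flip: cmod_power2)
  ultimately have "Im ((1 - w) * u) * ((1 + Re w)^2 + (Im w)^2) > 0" using assms(1,2) by simp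
  moreover have "(1 + Re w)^2 + (Im w)^2 \<ge> 0" by simp
  ultimately show ?thesis by (simp add: zero_less_mult_iff)
qed

text \<open>With \<open>w = g' / h'\<close> and \<open>u = h' \<gamma>'\<close>, the derivative of \<open>Im (h + conj g)\<close> along \<open>\<gamma>\<close> is
  \<open>Im ((1 - w) u)\<close>, while \<open>(1 + w) u = (h' + g') \<gamma>'\<close> points up the imaginary axis.\<close>
lemma Im_harmonic_has_pos_derivative:
  assumes h: "h holomorphic_on unit_disc" and g: "g holomorphic_on unit_disc"
    and sense: "\<forall>z\<in>unit_disc. deriv h z \<noteq> 0 \<and> norm (deriv g z / deriv h z) < 1"
    and \<gamma>: "(\<gamma> has_vector_derivative \<gamma>') (at \<theta>)" "\<gamma> \<theta> \<in> unit_disc"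
    and Re0: "Re ((deriv h (\<gamma> \<theta>) + deriv g (\<gamma> \<theta>)) * \<gamma>') = 0"
    and Im_pos: "Im ((deriv h (\<gamma> \<theta>) + deriv g (\<gamma> \<theta>)) * \<gamma>') > 0"
  shows "\<exists>d. ((\<lambda>\<theta>. Im (h (\<gamma> \<theta>) + cnj (g (\<gamma> \<theta>)))) has_real_derivative d) (at \<theta>) \<and> d > 0"
proof -
  define z where "z = \<gamma> \<theta>"
  define w where "w = deriv g z / deriv h z"
  define u where "u = deriv h z * \<gamma>'"
  have hz: "deriv h z \<noteq> 0" and w: "norm w < 1" using sense \<gamma>(2) unfolding w_def z_def by auto
  have gz: "deriv g z = w * deriv h z" unfolding w_def using hz by simp
  have "((h \<circ> \<gamma>) has_vector_derivative \<gamma>' * deriv h z) (at \<theta>)"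
    "((g \<circ> \<gamma>) has_vector_derivative \<gamma>' * deriv g z) (at \<theta>)"
    using field_vector_diff_chain_at[OF \<gamma>(1)] holomorphic_derivI[OF h open_unit_disc \<gamma>(2)]
      holomorphic_derivI[OF g open_unit_disc \<gamma>(2)] unfolding z_def by auto
  from DERIV_diff[OF has_field_derivative_Im[OF this(1)] has_field_derivative_Im[OF this(2)]]
  have "((\<lambda>\<theta>. Im (h (\<gamma> \<theta>) + cnj (g (\<gamma> \<theta>)))) has_real_derivative Im ((1 - w) * u)) (at \<theta>)"
    unfolding gz u_def by (simp add: algebra_simps)
  moreover have eq: "(1 + w) * u = (deriv h z + deriv g z) * \<gamma>'"
    unfolding u_def gz by (simp add: algebra_simps)
  have "Re ((1 + w) * u) = 0" "Im ((1 + w) * u) > 0"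
    unfolding eq z_def using Re0 Im_pos by simp_all
  then have "Im ((1 - w) * u) > 0" by (rule Im_one_minus_mult_pos[OF _ _ w])
  ultimately show ?thesis by blast
qed

lemma Im_harmonic_strict_mono_on_level_arc:
  assumes h: "h holomorphic_on unit_disc" and g: "g holomorphic_on unit_disc"
    and sense: "\<forall>z\<in>unit_disc. deriv h z \<noteq> 0 \<and> norm (deriv g z / deriv h z) < 1"
    and hg: "\<forall>z\<in>unit_disc. h z + g z = shear_phi \<alpha> z" and \<alpha>: "\<bar>\<alpha>\<bar> \<le> 1"
    and ex: "pos_root_exists (1 - \<alpha>) (1 + \<alpha>) (4 * c - 2 * \<alpha>)"
    and \<theta>: "\<bar>\<theta>1\<bar> < pi / 2" "\<bar>\<theta>2\<bar> < pi / 2" "\<theta>1 < \<theta>2"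
  defines "\<gamma> \<equiv> \<lambda>\<theta>. strip_to_disc (level_arc \<alpha> c \<theta>)"
  shows "Im (h (\<gamma> \<theta>1) + cnj (g (\<gamma> \<theta>1))) < Im (h (\<gamma> \<theta>2) + cnj (g (\<gamma> \<theta>2)))"
proof (rule DERIV_pos_imp_increasing[OF \<theta>(3)])
  fix x assume "\<theta>1 \<le> x" "x \<le> \<theta>2"
  then have x: "\<bar>x\<bar> < pi / 2" using \<theta> by auto
  have x_disc: "\<gamma> x \<in> unit_disc"
    unfolding \<gamma>_def level_arc_def using x by (intro strip_to_disc_in_unit_disc) simp
  obtain \<gamma>' where d\<gamma>: "(\<gamma> has_vector_derivative \<gamma>') (at x)"
    and Re0: "Re (deriv (shear_phi \<alpha>) (\<gamma> x) * \<gamma>') = 0"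
    and Im_pos: "Im (deriv (shear_phi \<alpha>) (\<gamma> x) * \<gamma>') > 0"
    using shear_phi_level_arc_tangent[OF \<alpha> ex x] unfolding \<gamma>_def by blast
  have eq: "deriv h (\<gamma> x) + deriv g (\<gamma> x) = deriv (shear_phi \<alpha>) (\<gamma> x)"
    using deriv_add_eq_shear_phi_deriv[OF h g hg x_disc] deriv_shear_phi x_disc
    unfolding mem_unit_disc by simp
  show "\<exists>d. ((\<lambda>\<theta>. Im (h (\<gamma> \<theta>) + cnj (g (\<gamma> \<theta>)))) has_real_derivative d) (at x) \<and> d > 0"
    by (rule Im_harmonic_has_pos_derivative[OF h g sense d\<gamma> x_disc]) (use Re0 Im_pos in \<open>simp_all only: eq\<close>)
qed

lemma inj_on_harmonic_shear_phi:
  assumes h: "h holomorphic_on unit_disc" and g: "g holomorphic_on unit_disc"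
    and sense: "\<forall>z\<in>unit_disc. deriv h z \<noteq> 0 \<and> norm (deriv g z / deriv h z) < 1"
    and hg: "\<forall>z\<in>unit_disc. h z + g z = shear_phi \<alpha> z" and \<alpha>: "\<bar>\<alpha>\<bar> \<le> 1"
  shows "inj_on (\<lambda>z. h z + cnj (g z)) unit_disc"
proof (rule inj_onI)
  fix z1 z2 assume z: "z1 \<in> unit_disc" "z2 \<in> unit_disc"
    and eq: "h z1 + cnj (g z1) = h z2 + cnj (g z2)"
  have Re_eq: "Re (shear_phi \<alpha> z) = Re (h z + cnj (g z))" if "z \<in> unit_disc" for z
    using hg that by (metis cnj.sel(1) plus_complex.sel(1))
  define c where "c = Re (shear_phi \<alpha> z1)"
  have "z1 \<in> {z \<in> unit_disc. Re (shear_phi \<alpha> z) = c}" "z2 \<in> {z \<in> unit_disc. Re (shear_phi \<alpha> z) = c}"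
    using z Re_eq[OF z(1)] Re_eq[OF z(2)] eq unfolding c_def by auto
  then obtain \<theta>1 \<theta>2 where ex: "pos_root_exists (1 - \<alpha>) (1 + \<alpha>) (4 * c - 2 * \<alpha>)"
    and \<theta>: "\<bar>\<theta>1\<bar> < pi / 2" "\<bar>\<theta>2\<bar> < pi / 2"
    and z12: "z1 = strip_to_disc (level_arc \<alpha> c \<theta>1)" "z2 = strip_to_disc (level_arc \<alpha> c \<theta>2)"
    unfolding level_set_shear_phi[OF \<alpha>] by (auto split: if_splits)
  note mono = Im_harmonic_strict_mono_on_level_arc[OF h g sense hg \<alpha> ex]
  have "\<theta>1 = \<theta>2"
    using mono[OF \<theta>] mono[OF \<theta>(2,1)] eq unfolding z12 by (metis less_irrefl linorder_neqE)
  then show "z1 = z2" unfolding z12 by simp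
qed

lemma convex_in_imag_direction_harmonic_shear_phi:
  assumes h: "h holomorphic_on unit_disc" and g: "g holomorphic_on unit_disc"
    and hg: "\<forall>z\<in>unit_disc. h z + g z = shear_phi \<alpha> z" and \<alpha>: "\<bar>\<alpha>\<bar> \<le> 1"
  shows "convex_in_imag_direction ((\<lambda>z. h z + cnj (g z)) ` unit_disc)"
  unfolding convex_in_imag_direction_def
proof
  fix c :: real
  define F where "F = (\<lambda>z. h z + cnj (g z))"
  define I where "I = {\<theta>::real. \<bar>\<theta>\<bar> < pi / 2}"
  define \<gamma> where "\<gamma> = (\<lambda>\<theta>. strip_to_disc (level_arc \<alpha> c \<theta>))"
  have "Re (F z) = Re (shear_phi \<alpha> z)" if "z \<in> unit_disc" for z
    using hg that unfolding F_def by (metis cnj.sel(1) plus_complex.sel(1))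
  then have "{w \<in> F ` unit_disc. Re w = c} = F ` {z \<in> unit_disc. Re (shear_phi \<alpha> z) = c}"
    by auto
  also have "\<dots> = (if pos_root_exists (1 - \<alpha>) (1 + \<alpha>) (4 * c - 2 * \<alpha>) then (F \<circ> \<gamma>) ` I else {})"
    unfolding level_set_shear_phi[OF \<alpha>] \<gamma>_def I_def by (simp add: image_comp)
  finally have slice: "{w \<in> F ` unit_disc. Re w = c}
      = (if pos_root_exists (1 - \<alpha>) (1 + \<alpha>) (4 * c - 2 * \<alpha>) then (F \<circ> \<gamma>) ` I else {})" .
  show "connected {w \<in> F ` unit_disc. Re w = c}"
  proof (cases "pos_root_exists (1 - \<alpha>) (1 + \<alpha>) (4 * c - 2 * \<alpha>)")
    case True
    have "\<gamma> ` I \<subseteq> unit_disc"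
      unfolding \<gamma>_def I_def level_arc_def by (auto intro: strip_to_disc_in_unit_disc)
    then have "continuous_on (\<gamma> ` I) F"
      using continuous_on_harmonic[OF h g] continuous_on_subset unfolding F_def by blast
    with continuous_on_level_arc[OF \<alpha> True] have "continuous_on I (F \<circ> \<gamma>)"
      unfolding \<gamma>_def I_def by (rule continuous_on_compose)
    moreover have "I = {- (pi / 2)<..<pi / 2}" unfolding I_def by (auto simp: abs_less_iff)
    ultimately show ?thesis unfolding slice using True by (simp add: connected_continuous_image)
  qed (simp add: slice)
qed

lemma shear_phi_S_H:
  assumes decomp: "harmonic_decomp f h g"
    and sense: "\<forall>z\<in>unit_disc. deriv h z \<noteq> 0 \<and> norm (deriv g z / deriv h z) < 1"
    and hg: "\<forall>z\<in>unit_disc. h z + g z = shear_phi \<alpha> z" and \<alpha>: "\<bar>\<alpha>\<bar> \<le> 1"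
    and norm: "f 0 = 0" "deriv h 0 = 1"
  shows "f \<in> S_H \<and> open (f ` unit_disc) \<and> connected (f ` unit_disc) \<and>
    convex_in_imag_direction (f ` unit_disc)"
proof -
  have hol: "h holomorphic_on unit_disc" "g holomorphic_on unit_disc"
    and f: "\<And>z. z \<in> unit_disc \<Longrightarrow> f z = h z + cnj (g z)"
    using decomp unfolding harmonic_decomp_def by auto
  have image: "f ` unit_disc = (\<lambda>z. h z + cnj (g z)) ` unit_disc" using f by auto
  have "inj_on f unit_disc = inj_on (\<lambda>z. h z + cnj (g z)) unit_disc"
    by (rule inj_on_cong) (simp add: f)
  then have "f \<in> S_H"
    unfolding S_H_def using inj_on_harmonic_shear_phi[OF hol sense hg \<alpha>] decomp sense norm by blast
  moreover have "open (f ` unit_disc)"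
    unfolding image by (rule open_image_harmonic[OF hol open_unit_disc sense])
  moreover have "connected (f ` unit_disc)"
    unfolding image by (rule connected_continuous_image[OF continuous_on_harmonic[OF hol] connected_unit_disc])
  moreover have "convex_in_imag_direction (f ` unit_disc)"
    unfolding image by (rule convex_in_imag_direction_harmonic_shear_phi[OF hol hg \<alpha>])
  ultimately show ?thesis by blast
qed

section \<open>Convex combinations of the two mappings\<close>

lemma S_H_normalization_convex_comb:
  assumes "f1 \<in> S_H" "f2 \<in> S_H" "harmonic_decomp f1 h1 g1" "harmonic_decomp f2 h2 g2"
  shows "complex_of_real t * f1 0 + complex_of_real (1 - t) * f2 0 = 0"
    and "deriv (\<lambda>z. complex_of_real t * h1 z + complex_of_real (1 - t) * h2 z) 0 = 1"
proof -
  have "h1 holomorphic_on unit_disc" "h2 holomorphic_on unit_disc"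
    using assms(3,4) unfolding harmonic_decomp_def by auto
  from deriv_convex_comb[OF this open_unit_disc, of 0 t]
  show "deriv (\<lambda>z. complex_of_real t * h1 z + complex_of_real (1 - t) * h2 z) 0 = 1"
    using S_H_normalization(2)[OF assms(1,3)] S_H_normalization(2)[OF assms(2,4)]
    by (simp add: mem_unit_disc algebra_simps)
  show "complex_of_real t * f1 0 + complex_of_real (1 - t) * f2 0 = 0"
    using S_H_normalization(1)[OF assms(1,3)] S_H_normalization(1)[OF assms(2,4)] by simp
qed

lemma convex_comb_sense_preserving:
  assumes f: "f1 \<in> S_H" "f2 \<in> S_H" "harmonic_decomp f1 h1 g1" "harmonic_decomp f2 h2 g2"
    and hg: "\<forall>z\<in>unit_disc. h1 z + g1 z = shear_phi \<alpha>1 z" "\<forall>z\<in>unit_disc. h2 z + g2 z = shear_phi \<alpha>2 z"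
    and \<omega>: "\<forall>z\<in>unit_disc. deriv g1 z / deriv h1 z = - z" "\<forall>z\<in>unit_disc. deriv g2 z / deriv h2 z = z"
    and \<alpha>: "-1 \<le> \<alpha>2" "\<alpha>2 \<le> \<alpha>1" "\<alpha>1 \<le> 1" and t: "0 \<le> t" "t \<le> 1" and z: "z \<in> unit_disc"
  defines "h \<equiv> \<lambda>z. complex_of_real t * h1 z + complex_of_real (1 - t) * h2 z"
    and "g \<equiv> \<lambda>z. complex_of_real t * g1 z + complex_of_real (1 - t) * g2 z"
  shows "deriv h z \<noteq> 0 \<and> norm (deriv g z / deriv h z) < 1"
proof -
  have hol: "h1 holomorphic_on unit_disc" "g1 holomorphic_on unit_disc"
    "h2 holomorphic_on unit_disc" "g2 holomorphic_on unit_disc"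
    using f(3,4) unfolding harmonic_decomp_def by auto
  define d1 where "d1 = deriv h1 z"
  define d2 where "d2 = deriv h2 z"
  have nz: "d1 \<noteq> 0" "d2 \<noteq> 0" unfolding d1_def d2_def using S_H_deriv_nonzero f z by auto
  have "d1 * (1 + - z) = (1 - 2 * complex_of_real \<alpha>1 * z + z^2) / (1 - z^2)^2"
    unfolding d1_def by (rule deriv_h_of_dilatation[OF hol(1,2) hg(1) z nz(1)[unfolded d1_def]])
      (use \<omega>(1) z in simp)
  moreover have "d2 * (1 + z) = (1 - 2 * complex_of_real \<alpha>2 * z + z^2) / (1 - z^2)^2"
    unfolding d2_def by (rule deriv_h_of_dilatation[OF hol(3,4) hg(2) z nz(2)[unfolded d2_def]])
      (use \<omega>(2) z in simp)
  ultimately have "complex_of_real t * d1 + complex_of_real (1 - t) * d2 \<noteq> 0"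
    and "norm (z * (complex_of_real (1 - t) * d2 - complex_of_real t * d1)
               / (complex_of_real t * d1 + complex_of_real (1 - t) * d2)) < 1"
    using convex_comb_dilatation_lt_1[of z \<alpha>2 \<alpha>1 t d1 d2] \<alpha> t z unfolding mem_unit_disc by auto
  moreover have "deriv h z = complex_of_real t * d1 + complex_of_real (1 - t) * d2"
    unfolding h_def d1_def d2_def by (rule deriv_convex_comb[OF hol(1,3) open_unit_disc z])
  moreover have "deriv g z = z * (complex_of_real (1 - t) * d2 - complex_of_real t * d1)"
    unfolding g_def deriv_convex_comb[OF hol(2,4) open_unit_disc z]
    using \<omega> nz z unfolding d1_def d2_def by (simp add: divide_eq_eq algebra_simps)
  ultimately show ?thesis by simp
qed

lemma shear_phi_convex_comb_sum:
  assumes "\<forall>z\<in>unit_disc. h1 z + g1 z = shear_phi \<alpha>1 z" "\<forall>z\<in>unit_disc. h2 z + g2 z = shear_phi \<alpha>2 z"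
  shows "\<forall>z\<in>unit_disc. (complex_of_real t * h1 z + complex_of_real (1 - t) * h2 z)
      + (complex_of_real t * g1 z + complex_of_real (1 - t) * g2 z) = shear_phi (t * \<alpha>1 + (1 - t) * \<alpha>2) z"
proof
  fix z assume z: "z \<in> unit_disc"
  have "(complex_of_real t * h1 z + complex_of_real (1 - t) * h2 z)
      + (complex_of_real t * g1 z + complex_of_real (1 - t) * g2 z)
      = complex_of_real t * (h1 z + g1 z) + complex_of_real (1 - t) * (h2 z + g2 z)"
    by (simp add: algebra_simps)
  also have "\<dots> = shear_phi (t * \<alpha>1 + (1 - t) * \<alpha>2) z"
    using assms z by (simp only: shear_phi_convex_comb)
  finally show "(complex_of_real t * h1 z + complex_of_real (1 - t) * h2 z)
      + (complex_of_real t * g1 z + complex_of_real (1 - t) * g2 z) = shear_phi (t * \<alpha>1 + (1 - t) * \<alpha>2) z" .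
qed

lemma abs_convex_comb_le_1:
  fixes a b t :: real
  assumes "\<bar>a\<bar> \<le> 1" "\<bar>b\<bar> \<le> 1" "0 \<le> t" "t \<le> 1"
  shows "\<bar>t * a + (1 - t) * b\<bar> \<le> 1"
proof -
  have "\<bar>t * a + (1 - t) * b\<bar> \<le> t * \<bar>a\<bar> + (1 - t) * \<bar>b\<bar>"
    using assms(3,4) abs_triangle_ineq[of "t * a" "(1 - t) * b"] by (simp add: abs_mult)
  also have "\<dots> \<le> t * 1 + (1 - t) * 1"
    using assms by (intro add_mono mult_left_mono) auto
  finally show ?thesis by simp
qed

theorem theorem2p7:
  fixes f1 f2 h1 g1 h2 g2 :: "complex \<Rightarrow> complex" and \<alpha>1 \<alpha>2 t :: real
  assumes "\<alpha>1 \<in> {-1..1}" and "\<alpha>2 \<in> {-1..1}"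
    and "f1 \<in> S_H" and "f2 \<in> S_H"
    and "harmonic_decomp f1 h1 g1" and "harmonic_decomp f2 h2 g2"
    and "\<forall>z\<in>unit_disc. h1 z + g1 z = z * (1 - complex_of_real \<alpha>1 * z) / (1 - z^2)"
    and "\<forall>z\<in>unit_disc. h2 z + g2 z = z * (1 - complex_of_real \<alpha>2 * z) / (1 - z^2)"
    and "\<forall>z\<in>unit_disc. deriv g1 z / deriv h1 z = - z"
    and "\<forall>z\<in>unit_disc. deriv g2 z / deriv h2 z = z"
    and "\<alpha>1 \<ge> \<alpha>2"
    and "0 \<le> t" and "t \<le> 1"
  shows "(\<lambda>z. complex_of_real t * f1 z + complex_of_real (1 - t) * f2 z) \<in> S_H \<and>
         open ((\<lambda>z. complex_of_real t * f1 z + complex_of_real (1 - t) * f2 z) ` unit_disc) \<and>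
         connected ((\<lambda>z. complex_of_real t * f1 z + complex_of_real (1 - t) * f2 z) ` unit_disc) \<and>
         convex_in_imag_direction
           ((\<lambda>z. complex_of_real t * f1 z + complex_of_real (1 - t) * f2 z) ` unit_disc)"
proof -
  define h where "h = (\<lambda>z. complex_of_real t * h1 z + complex_of_real (1 - t) * h2 z)"
  define g where "g = (\<lambda>z. complex_of_real t * g1 z + complex_of_real (1 - t) * g2 z)"
  have hg12: "\<forall>z\<in>unit_disc. h1 z + g1 z = shear_phi \<alpha>1 z" "\<forall>z\<in>unit_disc. h2 z + g2 z = shear_phi \<alpha>2 z"
    using assms(7,8) by (simp_all add: shear_phi_def)
  have "harmonic_decomp (\<lambda>z. complex_of_real t * f1 z + complex_of_real (1 - t) * f2 z) h g"
    unfolding h_def g_def by (rule harmonic_decomp_convex_comb[OF assms(5,6)])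
  moreover have "\<forall>z\<in>unit_disc. deriv h z \<noteq> 0 \<and> norm (deriv g z / deriv h z) < 1"
    using convex_comb_sense_preserving[OF assms(3-6) hg12 assms(9,10)] assms(1,2,11-13)
    unfolding h_def g_def by auto
  moreover have "\<forall>z\<in>unit_disc. h z + g z = shear_phi (t * \<alpha>1 + (1 - t) * \<alpha>2) z"
    unfolding h_def g_def by (rule shear_phi_convex_comb_sum[OF hg12])
  moreover have "\<bar>t * \<alpha>1 + (1 - t) * \<alpha>2\<bar> \<le> 1"
    using assms(1,2,12,13) by (intro abs_convex_comb_le_1) auto
  ultimately show ?thesis
    using shear_phi_S_H S_H_normalization_convex_comb[OF assms(3-6)] unfolding h_def by blast
qed

end
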